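(* Let $\operatorname{Pic}(\operatorname{Spec}\mathbf{Z})$ be the commutative monoid of isomorphism classes of torsion-free rank-1 abelian groups with product induced by $\otimes_{\mathbf{Z}}$ (equivalently, arithmetic divisors $\sum_p n_p[p]$, $n_p\in\mathbf{Z}\cup\{+\infty\}$, $n_p<0$ for finitely many $p$, modulo principal divisors, with addition). Let $\mathcal{P}$ be the set of all subsets $S$ of the set of rational primes, and define $\Theta:\mathcal{P}\to\operatorname{Pic}(\operatorname{Spec}\mathbf{Z})$ by $\Theta(S)=[\mathbf{Z}[1/p\mid p\in S]]$. Then the image of $\Theta$ is exactly the set of idempotent elements of $\operatorname{Pic}(\operatorname{Spec}\mathbf{Z})$. *)

theory Defs
  imports "HOL-Computational_Algebra.Computational_Algebra"
begin

datatype zinf = Fin int | PInf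

fun zinf_add :: "zinf \<Rightarrow> zinf \<Rightarrow> zinf" where
  "zinf_add (Fin a) (Fin b) = Fin (a + b)"
| "zinf_add _ _ = PInf"

fun zinf_neg :: "zinf \<Rightarrow> bool" where
  "zinf_neg (Fin a) = (a < 0)"
| "zinf_neg PInf = False"

text \<open>Arithmetic divisors on Spec Z: coefficients indexed by natural numbers,
  only primes carry information (non-primes are forced to coefficient 0);
  only finitely many coefficients are negative.\<close>
definition arith_divisor :: "(nat \<Rightarrow> zinf) \<Rightarrow> bool" where
  "arith_divisor D \<longleftrightarrow> (\<forall>p. \<not> prime p \<longrightarrow> D p = Fin 0) \<and> finite {p. zinf_neg (D p)}"

definition div_add :: "(nat \<Rightarrow> zinf) \<Rightarrow> (nat \<Rightarrow> zinf) \<Rightarrow> nat \<Rightarrow> zinf" where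
  "div_add D E = (\<lambda>p. zinf_add (D p) (E p))"

definition vp :: "nat \<Rightarrow> rat \<Rightarrow> int" where
  "vp p q = int (multiplicity (int p) (fst (quotient_of q)))
           - int (multiplicity (int p) (snd (quotient_of q)))"

definition principal_div :: "rat \<Rightarrow> nat \<Rightarrow> zinf" where
  "principal_div q = (\<lambda>p. if prime p then Fin (vp p q) else Fin 0)"

definition div_equiv :: "(nat \<Rightarrow> zinf) \<Rightarrow> (nat \<Rightarrow> zinf) \<Rightarrow> bool" where
  "div_equiv D E \<longleftrightarrow> arith_divisor D \<and> arith_divisor E \<and>
     (\<exists>q. q \<noteq> 0 \<and> E = div_add D (principal_div q))"

definition div_class :: "(nat \<Rightarrow> zinf) \<Rightarrow> (nat \<Rightarrow> zinf) set" where
  "div_class D = {E. div_equiv D E}"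

definition Pic :: "(nat \<Rightarrow> zinf) set set" where
  "Pic = {div_class D | D. arith_divisor D}"

definition Pic_add :: "(nat \<Rightarrow> zinf) set \<Rightarrow> (nat \<Rightarrow> zinf) set \<Rightarrow> (nat \<Rightarrow> zinf) set" where
  "Pic_add X Y = {F. \<exists>D\<in>X. \<exists>E\<in>Y. div_equiv (div_add D E) F}"

definition div_of_subgroup :: "rat set \<Rightarrow> nat \<Rightarrow> zinf" where
  "div_of_subgroup A = (\<lambda>p. if \<not> prime p then Fin 0
     else if bdd_above {- vp p a | a. a \<in> A \<and> a \<noteq> 0}
          then Fin (Sup {- vp p a | a. a \<in> A \<and> a \<noteq> 0}) else PInf)"

text \<open>Z[1/p | p in S] as a subring of Q.\<close>
definition Zloc :: "nat set \<Rightarrow> rat set" where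
  "Zloc S = {q. \<forall>p. prime p \<and> int p dvd snd (quotient_of q) \<longrightarrow> p \<in> S}"

definition Theta :: "nat set \<Rightarrow> (nat \<Rightarrow> zinf) set" where
  "Theta S = div_class (div_of_subgroup (Zloc S))"

end

theory Submission
  imports Defs
begin

text \<open>
  If the class of D is idempotent then D + D + div(q) = D for some rational q \<noteq> 0.
  At a prime where D has a finite coefficient n this reads 2n + v_p(q) = n, so
  D + div(q) has coefficient 0 there, and +\<infinity> wherever D does: D is equivalent to
  the divisor that is +\<infinity> exactly on a set S of primes. That divisor is idempotent and
  is the divisor of Z[1/p | p \<in> S], because 1/p^n lies in this ring for p \<in> S, whereas
  its elements have nonnegative valuation at every prime outside S.
\<close>

interpretation zinf_add: comm_monoid zinf_add "Fin 0"
proof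
  show "zinf_add (zinf_add x y) z = zinf_add x (zinf_add y z)" for x y z
    by (cases x; cases y; cases z) auto
  show "zinf_add x y = zinf_add y x" for x y
    by (cases x; cases y) auto
  show "zinf_add x (Fin 0) = x" for x
    by (cases x) auto
qed

lemma zinf_add_double_eq_Fin_iff:
  "zinf_add (zinf_add x x) (Fin v) = x \<longleftrightarrow> x = PInf \<or> x = Fin (- v)"
  by (cases x) auto

lemma vp_Fract:
  assumes p: "prime p" and a: "a \<noteq> 0" and b: "b \<noteq> 0"
  shows "vp p (Rat.Fract a b) = int (multiplicity (int p) a) - int (multiplicity (int p) b)"
proof -
  obtain a' b' where q: "quotient_of (Rat.Fract a b) = (a', b')"
    by (cases "quotient_of (Rat.Fract a b)")
  have b': "b' > 0" using quotient_of_denom_pos[OF q] .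
  have "Rat.Fract a' b' = Rat.Fract a b" using quotient_of_eq[OF q] .
  hence cross: "a' * b = a * b'" using b b' by (simp add: eq_rat)
  hence a': "a' \<noteq> 0" using a b b' by auto
  have "prime_elem (int p)" using p by auto
  hence "multiplicity (int p) a' + multiplicity (int p) b =
         multiplicity (int p) a + multiplicity (int p) b'"
    using arg_cong[OF cross, of "multiplicity (int p)"] a b a' b'
    by (simp add: prime_elem_multiplicity_mult_distrib)
  thus ?thesis unfolding vp_def q by simp
qed

lemma vp_mult:
  assumes p: "prime p" and x: "x \<noteq> 0" and y: "y \<noteq> 0"
  shows "vp p (x * y) = vp p x + vp p y"
proof -
  obtain a b where x_eq: "x = Rat.Fract a b" and b: "b \<noteq> 0"
    by (metis Fract_quotient_of quotient_of_denom_pos' less_irrefl)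
  obtain c d where y_eq: "y = Rat.Fract c d" and d: "d \<noteq> 0"
    by (metis Fract_quotient_of quotient_of_denom_pos' less_irrefl)
  have "a \<noteq> 0" "c \<noteq> 0" using x y x_eq y_eq b d by (auto simp: Fract_of_int_quotient)
  moreover have "prime_elem (int p)" using p by auto
  ultimately show ?thesis
    using vp_Fract[OF p] b d unfolding x_eq y_eq
    by (simp add: prime_elem_multiplicity_mult_distrib)
qed

lemma vp_one [simp]: "vp p 1 = 0"
  unfolding vp_def by simp

lemma vp_Fract_one_prime_power:
  assumes p: "prime p"
  shows "vp p (Rat.Fract 1 (int p ^ n)) = - int n"
proof -
  have "prime_elem (int p)" using p by auto
  thus ?thesis using vp_Fract[OF p, of 1 "int p ^ n"] p by simp
qed

lemma principal_div_mult:
  assumes "q \<noteq> 0" "r \<noteq> 0"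
  shows "principal_div (q * r) = div_add (principal_div q) (principal_div r)"
  using assms by (auto simp: principal_div_def div_add_def vp_mult)

lemma div_add_principal_div_one [simp]: "div_add D (principal_div 1) = D"
  by (rule ext) (simp add: div_add_def principal_div_def zinf_add.comm_neutral)

lemma div_add_assoc: "div_add (div_add D E) F = div_add D (div_add E F)"
  by (simp add: div_add_def zinf_add.assoc)

lemma div_add_interchange:
  "div_add (div_add D E) (div_add D' E') = div_add (div_add D D') (div_add E E')"
  by (simp add: div_add_def ac_simps)

lemma arith_divisor_div_add:
  assumes "arith_divisor D" "arith_divisor E"
  shows "arith_divisor (div_add D E)"
proof -
  have "{p. zinf_neg (div_add D E p)} \<subseteq> {p. zinf_neg (D p)} \<union> {p. zinf_neg (E p)}"
  proof
    fix p assume "p \<in> {p. zinf_neg (div_add D E p)}"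
    thus "p \<in> {p. zinf_neg (D p)} \<union> {p. zinf_neg (E p)}"
      by (cases "D p"; cases "E p") (auto simp: div_add_def)
  qed
  thus ?thesis using assms unfolding arith_divisor_def
    by (auto simp: div_add_def intro: finite_subset)
qed

lemma div_equiv_refl: "arith_divisor D \<Longrightarrow> div_equiv D D"
  unfolding div_equiv_def by (auto intro: exI[of _ 1])

lemma div_equiv_trans:
  assumes "div_equiv D E" "div_equiv E F"
  shows "div_equiv D F"
proof -
  obtain q where "q \<noteq> 0" "E = div_add D (principal_div q)"
    using assms(1) div_equiv_def by auto
  moreover obtain r where "r \<noteq> 0" "F = div_add E (principal_div r)"
    using assms(2) div_equiv_def by auto
  ultimately show ?thesis using assms unfolding div_equiv_def
    by (intro conjI exI[of _ "q * r"]) (auto simp: div_add_assoc principal_div_mult)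
qed

lemma div_equiv_sym:
  assumes "div_equiv D E"
  shows "div_equiv E D"
proof -
  obtain q where q: "q \<noteq> 0" "E = div_add D (principal_div q)"
    using assms div_equiv_def by auto
  have "div_add E (principal_div (inverse q)) = D"
    using q by (simp add: div_add_assoc principal_div_mult[symmetric])
  thus ?thesis using assms q unfolding div_equiv_def
    by (intro conjI exI[of _ "inverse q"]) auto
qed

lemma div_class_eq:
  assumes "div_equiv D E"
  shows "div_class D = div_class E"
  unfolding div_class_def using assms div_equiv_trans div_equiv_sym by blast

lemma div_equiv_div_add:
  assumes "div_equiv D D'" "div_equiv E E'"
  shows "div_equiv (div_add D E) (div_add D' E')"
proof -
  obtain q where q: "q \<noteq> 0" "D' = div_add D (principal_div q)"
    using assms(1) div_equiv_def by auto
  obtain r where r: "r \<noteq> 0" "E' = div_add E (principal_div r)"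
    using assms(2) div_equiv_def by auto
  have "div_add D' E' = div_add (div_add D E) (principal_div (q * r))"
    using q r by (simp add: div_add_interchange principal_div_mult)
  moreover have "arith_divisor (div_add D E)" "arith_divisor (div_add D' E')"
    using assms arith_divisor_div_add unfolding div_equiv_def by auto
  moreover have "q * r \<noteq> 0" using q r by simp
  ultimately show ?thesis unfolding div_equiv_def by blast
qed

lemma Pic_add_div_class:
  assumes "arith_divisor D" "arith_divisor E"
  shows "Pic_add (div_class D) (div_class E) = div_class (div_add D E)"
proof
  show "Pic_add (div_class D) (div_class E) \<subseteq> div_class (div_add D E)"
    unfolding Pic_add_def div_class_def using div_equiv_div_add div_equiv_trans by blast
  show "div_class (div_add D E) \<subseteq> Pic_add (div_class D) (div_class E)"
    unfolding Pic_add_def div_class_def using assms div_equiv_refl by blast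
qed

definition pinf_divisor :: "nat set \<Rightarrow> nat \<Rightarrow> zinf" where
  "pinf_divisor S = (\<lambda>p. if prime p \<and> p \<in> S then PInf else Fin 0)"

lemma arith_divisor_pinf_divisor: "arith_divisor (pinf_divisor S)"
proof -
  have "{p. zinf_neg (pinf_divisor S p)} = {}" by (simp add: pinf_divisor_def)
  thus ?thesis unfolding arith_divisor_def by (simp add: pinf_divisor_def)
qed

lemma div_add_pinf_divisor_self: "div_add (pinf_divisor S) (pinf_divisor S) = pinf_divisor S"
  unfolding div_add_def pinf_divisor_def by auto

lemma div_equiv_pinf_divisor_if_idempotent:
  assumes D: "arith_divisor D" and idem: "Pic_add (div_class D) (div_class D) = div_class D"
  shows "div_equiv D (pinf_divisor {p. prime p \<and> D p = PInf})"
proof -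
  have "div_class (div_add D D) = div_class D"
    using idem Pic_add_div_class[OF D D] by simp
  hence "D \<in> div_class (div_add D D)"
    using div_equiv_refl[OF D] by (simp add: div_class_def)
  then obtain q where q: "q \<noteq> 0" "D = div_add (div_add D D) (principal_div q)"
    unfolding div_class_def div_equiv_def by auto
  have "div_add D (principal_div q) = pinf_divisor {p. prime p \<and> D p = PInf}"
  proof
    fix p
    show "div_add D (principal_div q) p = pinf_divisor {p. prime p \<and> D p = PInf} p"
    proof (cases "prime p")
      case False
      thus ?thesis using D by (simp add: arith_divisor_def div_add_def principal_div_def pinf_divisor_def)
    next
      case True
      hence "zinf_add (zinf_add (D p) (D p)) (Fin (vp p q)) = D p"
        using fun_cong[OF q(2), of p] by (simp add: div_add_def principal_div_def)
      thus ?thesis using True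
        by (auto simp: zinf_add_double_eq_Fin_iff div_add_def principal_div_def pinf_divisor_def)
    qed
  qed
  thus ?thesis using D q(1) arith_divisor_pinf_divisor unfolding div_equiv_def by metis
qed

lemma Fract_one_prime_power_in_Zloc:
  assumes "prime p" "p \<in> S"
  shows "Rat.Fract 1 (int p ^ n) \<in> Zloc S"
proof -
  have "quotient_of (Rat.Fract 1 (int p ^ n)) = (1, int p ^ n)"
    using assms prime_gt_0_nat by (simp add: quotient_of_Fract normalize_def)
  moreover have "r = p" if "prime r" "int r dvd int p ^ n" for r
    using that assms(1) prime_dvd_power primes_dvd_imp_eq
    by (metis of_nat_dvd_iff of_nat_power)
  ultimately show ?thesis using assms(2) unfolding Zloc_def by auto
qed

lemma vp_nonneg_if_in_Zloc:
  assumes "a \<in> Zloc S" "prime p" "p \<notin> S"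
  shows "vp p a \<ge> 0"
proof -
  have "\<not> int p dvd snd (quotient_of a)" using assms unfolding Zloc_def by auto
  hence "multiplicity (int p) (snd (quotient_of a)) = 0" by (rule not_dvd_imp_multiplicity_0)
  thus ?thesis unfolding vp_def by simp
qed

lemma div_of_subgroup_Zloc:
  "div_of_subgroup (Zloc S) = pinf_divisor S"
proof
  fix p
  let ?A = "{- vp p a | a. a \<in> Zloc S \<and> a \<noteq> 0}"
  consider "\<not> prime p" | "prime p" "p \<in> S" | "prime p" "p \<notin> S" by blast
  thus "div_of_subgroup (Zloc S) p = pinf_divisor S p"
  proof cases
    case 1
    thus ?thesis by (simp add: div_of_subgroup_def pinf_divisor_def)
  next
    case 2
    have in_A: "int n \<in> ?A" for n
    proof -
      have "Rat.Fract 1 (int p ^ n) \<noteq> 0"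
        using 2(1) prime_gt_0_nat by (simp add: Fract_of_int_quotient)
      thus ?thesis
        using Fract_one_prime_power_in_Zloc[OF 2] vp_Fract_one_prime_power[OF 2(1)]
        by (metis (mono_tags, lifting) mem_Collect_eq minus_minus)
    qed
    have "\<not> bdd_above ?A"
    proof
      assume "bdd_above ?A"
      then obtain M where "\<forall>x\<in>?A. x \<le> M" by (auto simp: bdd_above_def)
      hence "int (nat M + 1) \<le> M" using in_A by blast
      thus False by linarith
    qed
    thus ?thesis using 2 by (simp add: div_of_subgroup_def pinf_divisor_def)
  next
    case 3
    have nonpos: "\<forall>x\<in>?A. x \<le> 0"
      using vp_nonneg_if_in_Zloc[OF _ 3] by auto
    have "(1::rat) \<in> Zloc S" by (simp add: Zloc_def)
    hence "0 \<in> ?A"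
      by (metis (mono_tags, lifting) mem_Collect_eq minus_zero one_neq_zero vp_one)
    hence "bdd_above ?A" "Sup ?A = 0"
      using nonpos by (auto simp: bdd_above_def intro!: cSup_eq_maximum)
    thus ?thesis using 3 by (simp add: div_of_subgroup_def pinf_divisor_def)
  qed
qed

lemma Theta_eq_div_class_pinf_divisor: "Theta S = div_class (pinf_divisor S)"
  by (simp add: Theta_def div_of_subgroup_Zloc)

theorem theorem2p16:
  shows "Theta ` {S. S \<subseteq> {p. prime p}} = {X \<in> Pic. Pic_add X X = X}"
proof
  show "Theta ` {S. S \<subseteq> {p. prime p}} \<subseteq> {X \<in> Pic. Pic_add X X = X}"
    using arith_divisor_pinf_divisor div_add_pinf_divisor_self
    by (auto simp: Theta_eq_div_class_pinf_divisor Pic_def Pic_add_div_class)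
next
  show "{X \<in> Pic. Pic_add X X = X} \<subseteq> Theta ` {S. S \<subseteq> {p. prime p}}"
  proof clarify
    fix X assume "X \<in> Pic" and idem: "Pic_add X X = X"
    then obtain D where D: "arith_divisor D" "X = div_class D" unfolding Pic_def by auto
    let ?S = "{p. prime p \<and> D p = PInf}"
    have "X = Theta ?S"
      using div_equiv_pinf_divisor_if_idempotent[OF D(1)] idem D(2)
      by (simp add: div_class_eq Theta_eq_div_class_pinf_divisor)
    thus "X \<in> Theta ` {S. S \<subseteq> {p. prime p}}" by blast
  qed
qed

end
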